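(* Let $G$ be a $2$-connected graph not containing $K_{2,3}$ as a minor, and let $K_0$ be a connected subgraph of $G$. Then $|N(K_1)|=2$ for every component $K_1$ of $G-(K_0\cup N(K_0))$.
   Context: Graphs are simple. For a subgraph $H$ of $G$, $N(H)$ denotes the set of vertices of $G$ not in $H$ that have a neighbour in $H$; $G-(K_0\cup N(K_0))$ is obtained by deleting the vertices of $K_0$ and of $N(K_0)$. *)

theory Defs
  imports Main
begin

definition sgraph :: "'a set \<Rightarrow> ('a \<Rightarrow> 'a \<Rightarrow> bool) \<Rightarrow> bool" where
  "sgraph V E \<longleftrightarrow> finite V \<and> (\<forall>x y. E x y \<longrightarrow> x \<in> V \<and> y \<in> V)
     \<and> (\<forall>x y. E x y \<longrightarrow> E y x) \<and> (\<forall>x. \<not> E x x)"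

definition connected_set :: "'a set \<Rightarrow> ('a \<Rightarrow> 'a \<Rightarrow> bool) \<Rightarrow> 'a set \<Rightarrow> bool" where
  "connected_set V E S \<longleftrightarrow> S \<subseteq> V \<and> S \<noteq> {} \<and>
     (\<forall>u\<in>S. \<forall>v\<in>S. (\<lambda>x y. x \<in> S \<and> y \<in> S \<and> E x y)\<^sup>*\<^sup>* u v)"

definition two_connected :: "'a set \<Rightarrow> ('a \<Rightarrow> 'a \<Rightarrow> bool) \<Rightarrow> bool" where
  "two_connected V E \<longleftrightarrow> card V \<ge> 3 \<and> connected_set V E V \<and>
     (\<forall>v\<in>V. connected_set V E (V - {v}))"

definition nbhd :: "'a set \<Rightarrow> ('a \<Rightarrow> 'a \<Rightarrow> bool) \<Rightarrow> 'a set \<Rightarrow> 'a set" where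
  "nbhd V E S = {v \<in> V - S. \<exists>u\<in>S. E u v}"

definition component_of :: "'a set \<Rightarrow> ('a \<Rightarrow> 'a \<Rightarrow> bool) \<Rightarrow> 'a set \<Rightarrow> 'a set \<Rightarrow> bool" where
  "component_of V E R C \<longleftrightarrow> C \<subseteq> R \<and> connected_set V E C \<and>
     (\<forall>D. C \<subseteq> D \<and> D \<subseteq> R \<and> connected_set V E D \<longrightarrow> D = C)"

definition has_minor :: "'a set \<Rightarrow> ('a \<Rightarrow> 'a \<Rightarrow> bool) \<Rightarrow> 'b set \<Rightarrow> ('b \<Rightarrow> 'b \<Rightarrow> bool) \<Rightarrow> bool" where
  "has_minor V E W F \<longleftrightarrow> (\<exists>\<phi> :: 'b \<Rightarrow> 'a set.
     (\<forall>w\<in>W. connected_set V E (\<phi> w)) \<and>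
     (\<forall>w\<in>W. \<forall>w'\<in>W. w \<noteq> w' \<longrightarrow> \<phi> w \<inter> \<phi> w' = {}) \<and>
     (\<forall>w\<in>W. \<forall>w'\<in>W. F w w' \<longrightarrow> (\<exists>x\<in>\<phi> w. \<exists>y\<in>\<phi> w'. E x y)))"

definition K23_V :: "nat set" where "K23_V = {0..<5}"
definition K23_E :: "nat \<Rightarrow> nat \<Rightarrow> bool" where
  "K23_E i j \<longleftrightarrow> (i < 2 \<and> 2 \<le> j \<and> j < 5) \<or> (j < 2 \<and> 2 \<le> i \<and> i < 5)"

end

theory Submission
  imports Defs
begin

text \<open>Every neighbour of K1 lies in N(K0), since K1 is a maximal connected set avoiding
  K0 \<union> N(K0). As N(K1) separates K1 from K0, 2-connectedness forces |N(K1)| \<ge> 2. Three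
  vertices of N(K1) would be common neighbours of the disjoint connected sets K0 and K1,
  and contracting K0 and K1 would give a K_{2,3} minor.\<close>

lemma connected_set_singleton: "v \<in> V \<Longrightarrow> connected_set V E {v}"
  unfolding connected_set_def by auto

lemma connected_set_insert:
  assumes "sgraph V E" "connected_set V E S" "x \<in> S" "E x v"
  shows "connected_set V E (insert v S)"
proof -
  let ?R = "\<lambda>y z. y \<in> S \<and> z \<in> S \<and> E y z"
  let ?Q = "\<lambda>y z. y \<in> insert v S \<and> z \<in> insert v S \<and> E y z"
  have "E v x" and "v \<in> V"
    using assms(1,4) unfolding sgraph_def by blast+
  have "?Q\<^sup>*\<^sup>* u x \<and> ?Q\<^sup>*\<^sup>* x u" if "u \<in> insert v S" for u
  proof (cases "u = v")
    case True
    then show ?thesis using \<open>E v x\<close> assms(3,4) by (auto intro: r_into_rtranclp)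
  next
    case False
    then have "?R\<^sup>*\<^sup>* u x \<and> ?R\<^sup>*\<^sup>* x u"
      using that assms(2,3) unfolding connected_set_def by blast
    then show ?thesis by (auto elim: rtranclp_mono[THEN predicate2D, rotated])
  qed
  then show ?thesis
    using assms(2) \<open>v \<in> V\<close> unfolding connected_set_def by (blast intro: rtranclp_trans)
qed

lemma connected_set_subset_if_disjoint_nbhd:
  assumes "connected_set V E T" "T \<inter> nbhd V E K = {}" "u \<in> T" "u \<in> K"
  shows "T \<subseteq> K"
proof
  fix z assume "z \<in> T"
  then have "(\<lambda>x y. x \<in> T \<and> y \<in> T \<and> E x y)\<^sup>*\<^sup>* u z"
    using assms(1,3) unfolding connected_set_def by blast
  then show "z \<in> K"
  proof (induction rule: rtranclp_induct)
    case (step y z)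
    then show ?case using assms(1,2) unfolding connected_set_def nbhd_def by blast
  qed (use assms(4) in simp)
qed

lemma two_connected_card_nbhd_ge_2:
  assumes "two_connected V E" "K \<subseteq> V" "K \<noteq> {}" "x \<in> V - (K \<union> nbhd V E K)"
  shows "2 \<le> card (nbhd V E K)"
proof (rule ccontr)
  assume "\<not> 2 \<le> card (nbhd V E K)"
  moreover have "finite V"
    using assms(1) card.infinite[of V] unfolding two_connected_def by fastforce
  then have "finite (nbhd V E K)" unfolding nbhd_def by simp
  ultimately consider "nbhd V E K = {}" | w where "nbhd V E K = {w}"
    by (metis card_0_eq card_1_singleton_iff less_2_cases not_le)
  then have "connected_set V E (V - nbhd V E K)"
  proof cases
    case 1
    then show ?thesis using assms(1) unfolding two_connected_def by simp
  next
    case (2 w)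
    then have "w \<in> V" unfolding nbhd_def by blast
    with 2 show ?thesis using assms(1) unfolding two_connected_def by simp
  qed
  moreover obtain u where "u \<in> K" using assms(3) by blast
  moreover have "u \<in> V - nbhd V E K" using \<open>u \<in> K\<close> assms(2) unfolding nbhd_def by blast
  ultimately have "V - nbhd V E K \<subseteq> K"
    by (intro connected_set_subset_if_disjoint_nbhd) blast+
  then show False using assms(4) by blast
qed

lemma nbhd_component_subset:
  assumes "sgraph V E" "component_of V E (V - (S \<union> nbhd V E S)) K"
  shows "nbhd V E K \<subseteq> nbhd V E S"
proof
  let ?R = "V - (S \<union> nbhd V E S)"
  fix v assume "v \<in> nbhd V E K"
  then obtain u where u: "u \<in> K" "E u v" and "v \<in> V" "v \<notin> K"
    unfolding nbhd_def by blast
  have "K \<subseteq> ?R" "connected_set V E K"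
    using assms(2) unfolding component_of_def by blast+
  have "v \<notin> S"
    using u \<open>K \<subseteq> ?R\<close> assms(1) unfolding sgraph_def nbhd_def by blast
  moreover have "insert v K \<noteq> K" using \<open>v \<notin> K\<close> by blast
  then have "\<not> insert v K \<subseteq> ?R"
    using assms connected_set_insert[OF assms(1) \<open>connected_set V E K\<close> u]
    unfolding component_of_def by blast
  ultimately show "v \<in> nbhd V E S" using \<open>K \<subseteq> ?R\<close> \<open>v \<in> V\<close> by blast
qed

lemma K23_minor_if_three_common_neighbours:
  assumes "sgraph V E" "connected_set V E A" "connected_set V E B" "A \<inter> B = {}"
    and "{a, b, c} \<subseteq> nbhd V E A \<inter> nbhd V E B" "a \<noteq> b" "a \<noteq> c" "b \<noteq> c"
  shows "has_minor V E K23_V K23_E"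
proof -
  define \<phi> where "\<phi> = (\<lambda>i::nat. if i = 0 then A else if i = 1 then B else
     if i = 2 then {a} else if i = 3 then {b} else {c})"
  have sym: "E x y \<Longrightarrow> E y x" for x y using assms(1) unfolding sgraph_def by blast
  have abc: "a \<in> V" "b \<in> V" "c \<in> V" "a \<notin> A" "b \<notin> A" "c \<notin> A" "a \<notin> B" "b \<notin> B" "c \<notin> B"
    using assms(5) unfolding nbhd_def by auto
  have branch_small: "\<phi> w = A \<or> \<phi> w = B" if "w < 2" for w
    using that unfolding \<phi>_def by auto
  have branch_large: "\<phi> w = {a} \<or> \<phi> w = {b} \<or> \<phi> w = {c}" if "2 \<le> w" for w
    using that unfolding \<phi>_def by auto
  have edges: "\<exists>x\<in>\<phi> w. \<exists>y\<in>\<phi> w'. E x y" if "w < 2" "2 \<le> w'" for w w'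
    using branch_small[OF that(1)] branch_large[OF that(2)] assms(5) unfolding nbhd_def by blast
  have K23_cases: "w = 0 \<or> w = 1 \<or> w = 2 \<or> w = 3 \<or> w = 4" if "w \<in> K23_V" for w
    using that by (auto simp: K23_V_def)
  show ?thesis
    unfolding has_minor_def
  proof (intro exI[of _ \<phi>] conjI ballI impI)
    fix w assume "w \<in> K23_V"
    then show "connected_set V E (\<phi> w)"
      using K23_cases by (auto simp: \<phi>_def assms(2,3) abc connected_set_singleton)
  next
    fix w w' assume "w \<in> K23_V" "w' \<in> K23_V" "w \<noteq> w'"
    then show "\<phi> w \<inter> \<phi> w' = {}"
      using K23_cases assms(4,6-8) abc by (auto simp: \<phi>_def)
  next
    fix w w' assume "K23_E w w'"
    then show "\<exists>x\<in>\<phi> w. \<exists>y\<in>\<phi> w'. E x y"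
      unfolding K23_E_def using edges sym by blast
  qed
qed

theorem lemma4p2:
  fixes V :: "'a set" and E :: "'a \<Rightarrow> 'a \<Rightarrow> bool" and K0 K1 :: "'a set"
  assumes "sgraph V E"
    and "two_connected V E"
    and "\<not> has_minor V E K23_V K23_E"
    and "connected_set V E K0"
    and "component_of V E (V - (K0 \<union> nbhd V E K0)) K1"
  shows "card (nbhd V E K1) = 2"
proof -
  have K1: "K1 \<subseteq> V - (K0 \<union> nbhd V E K0)" "connected_set V E K1"
    using assms(5) unfolding component_of_def by blast+
  have nbhd_K1: "nbhd V E K1 \<subseteq> nbhd V E K0"
    using assms(1,5) by (rule nbhd_component_subset)
  obtain x where "x \<in> K0" using assms(4) unfolding connected_set_def by blast
  then have "x \<in> V - (K1 \<union> nbhd V E K1)"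
    using K1(1) nbhd_K1 assms(4) unfolding connected_set_def nbhd_def by blast
  then have "2 \<le> card (nbhd V E K1)"
    using assms(2) K1 unfolding connected_set_def by (blast intro: two_connected_card_nbhd_ge_2)
  moreover have "\<not> 3 \<le> card (nbhd V E K1)"
  proof
    assume "3 \<le> card (nbhd V E K1)"
    then obtain a b c where abc: "{a, b, c} \<subseteq> nbhd V E K1" "a \<noteq> b" "a \<noteq> c" "b \<noteq> c"
      by (metis obtain_subset_with_card_n card_3_iff)
    have "K0 \<inter> K1 = {}" using K1(1) by blast
    moreover have "{a, b, c} \<subseteq> nbhd V E K0 \<inter> nbhd V E K1" using abc(1) nbhd_K1 by blast
    ultimately have "has_minor V E K23_V K23_E"
      using K23_minor_if_three_common_neighbours[OF assms(1,4) K1(2)] abc(2-4) by blast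
    with assms(3) show False ..
  qed
  ultimately show ?thesis by linarith
qed

end
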